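(* Let $\kappa$ be a regular uncountable cardinal and let $\mu,\lambda,\chi,\theta\le\kappa$ be cardinals with $\lambda^{<\chi}<\kappa\le2^\lambda$ and $\lambda^{<\chi}\le\theta^{<\chi}=\theta$. For every coloring $c_1:[\kappa]^2\to\theta$ there exists a coloring $c_0:[\kappa]^2\to\theta$ such that for every partition $p:[\kappa]^2\to\mu$: (1) if $c_1$ witnesses $\mathrm{pr}_1(\kappa,\kappa,\theta,\chi)_p$ then $c_0$ witnesses $\mathrm{pr}_0(\kappa,\kappa,\theta,\chi)_p$; (2) for every cardinal $\nu$, if $c_1$ witnesses $\mathrm{pr}_1(\kappa,\nu\circledast\kappa/1\circledast\kappa,\theta,\chi)_p$ then $c_0$ witnesses $\mathrm{pr}_0(\kappa,\nu\circledast\kappa/1\circledast\kappa,\theta,\chi)_p$.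
   Context: $[\kappa]^2$ denotes the set of pairs $(\alpha,\beta)$ with $\alpha<\beta<\kappa$; a partition is any function $p:[\kappa]^2\to\mu$. For an ordinal $\sigma$, $[\kappa]^\sigma$ is the set of subsets of $\kappa$ of order type $\sigma$; for $a\in[\kappa]^\sigma$ and $i<\sigma$, $a(i)$ is the $i$-th element of $a$; $a<b$ means every element of $a$ is below every element of $b$. Given $p:[\kappa]^2\to\mu$, a coloring $c:[\kappa]^2\to\theta$ witnesses: - $\mathrm{pr}_1(\kappa,\kappa,\theta,\chi)_p$ iff for every ordinal $\sigma<\chi$, every pairwise disjoint $\mathcal A\subseteq[\kappa]^\sigma$ of size $\kappa$ and every $\tau:\mu\to\theta$ there are $a,b\in\mathcal A$, $a<b$, with $c(\alpha,\beta)=\tau(p(\alpha,\beta))$ for all $\alpha\in a,\beta\in b$; - $\mathrm{pr}_0(\kappa,\kappa,\theta,\chi)_p$ iff for every ordinal $\sigma<\chi$, every pairwise disjoint $\mathcal A\subseteq[\kappa]^\sigma$ of size $\kappa$ and every matrix $(\tau_{i,j})_{i,j<\sigma}$ of functions $\mu\to\theta$ there are $a,b\in\mathcal A$, $a<b$, with $c(a(i),b(j))=\tau_{i,j}(p(a(i),b(j)))$ for all $i,j<\sigma$; - $\mathrm{pr}_1(\kappa,\nu\circledast\kappa/1\circledast\kappa,\theta,\chi)_p$ iff for every ordinal $\sigma<\chi$ and every two families $\mathcal A,\mathcal B\subseteq[\kappa]^\sigma$, each pairwise disjoint, with $|\mathcal A|=\nu$, $|\mathcal B|=\kappa$, there is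 $a\in\mathcal A$ such that for every $\tau:\mu\to\theta$ there is $b\in\mathcal B$ with $a<b$ and $c(\alpha,\beta)=\tau(p(\alpha,\beta))$ for all $\alpha\in a,\beta\in b$; - $\mathrm{pr}_0(\kappa,\nu\circledast\kappa/1\circledast\kappa,\theta,\chi)_p$ iff for every ordinal $\sigma<\chi$ and every two families $\mathcal A,\mathcal B\subseteq[\kappa]^\sigma$, each pairwise disjoint, with $|\mathcal A|=\nu$, $|\mathcal B|=\kappa$, there is $a\in\mathcal A$ such that for every matrix $(\tau_{i,j})_{i,j<\sigma}$ of functions $\mu\to\theta$ there is $b\in\mathcal B$ with $a<b$ and $c(a(i),b(j))=\tau_{i,j}(p(a(i),b(j)))$ for all $i,j<\sigma$. *)

theory Defs
  imports Main
begin

unbundle cardinal_syntax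

text \<open>
  The regular uncountable cardinal kappa is a cardinal order
  (initial ordinal) r on the carrier Field r; its elements are the ordinals
  below kappa.  A cardinal is represented by a set of that cardinality
  (theta by a colour set T, mu by a partition-colour set M, lambda by L,
  chi by X, nu by N).  Ordinals sigma below chi are well-orders sigma with
  sigma <o (card_of (X)).
\<close>

definition olt :: "'a rel \<Rightarrow> 'a \<Rightarrow> 'a \<Rightarrow> bool" where
  "olt r \<alpha> \<beta> \<longleftrightarrow> (\<alpha>, \<beta>) \<in> r \<and> \<alpha> \<noteq> \<beta>"

definition set_lt :: "'a rel \<Rightarrow> 'a set \<Rightarrow> 'a set \<Rightarrow> bool" where
  "set_lt r a b \<longleftrightarrow> (\<forall>\<alpha>\<in>a. \<forall>\<beta>\<in>b. olt r \<alpha> \<beta>)"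

text \<open>a(i): the i-th element of a (a of order type sigma), via the unique
  isomorphism from sigma onto the restriction of r to a\<close>
definition nth_elem :: "'a rel \<Rightarrow> 'b rel \<Rightarrow> 'a set \<Rightarrow> 'b \<Rightarrow> 'a" where
  "nth_elem r \<sigma> a i = (SOME f. iso \<sigma> (Restr r a) f) i"

definition disj_fam :: "'a rel \<Rightarrow> 'b rel \<Rightarrow> 'a set set \<Rightarrow> bool" where
  "disj_fam r \<sigma> \<A> \<longleftrightarrow>
     (\<forall>a\<in>\<A>. a \<subseteq> Field r \<and> Restr r a =o \<sigma>) \<and> pairwise disjnt \<A>"

text \<open>C has cardinality base^{<chi} = sup { |base|^nu : nu < chi cardinal },
  where chi = (card_of (X))\<close>
definition cexp_less_is :: "'l set \<Rightarrow> 'x set \<Rightarrow> 'd set \<Rightarrow> bool" where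
  "cexp_less_is L X C \<longleftrightarrow>
     (\<forall>S::'x set. (card_of (S)) <o (card_of (X)) \<longrightarrow> (card_of (Func S L)) <=o (card_of (C))) \<and>
     (\<forall>D::'d set. (\<forall>S::'x set. (card_of (S)) <o (card_of (X)) \<longrightarrow> (card_of (Func S L)) <=o (card_of (D))) \<longrightarrow> (card_of (C)) <=o (card_of (D)))"

definition coloring_into :: "'a rel \<Rightarrow> ('a \<Rightarrow> 'a \<Rightarrow> 't) \<Rightarrow> 't set \<Rightarrow> bool" where
  "coloring_into r c T \<longleftrightarrow> (\<forall>\<alpha> \<beta>. olt r \<alpha> \<beta> \<longrightarrow> c \<alpha> \<beta> \<in> T)"

definition pr1 :: "'a rel \<Rightarrow> 't set \<Rightarrow> 'x set \<Rightarrow> 'm set \<Rightarrow> ('a \<Rightarrow> 'a \<Rightarrow> 'm)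
                    \<Rightarrow> ('a \<Rightarrow> 'a \<Rightarrow> 't) \<Rightarrow> bool" where
  "pr1 r T X M p c \<longleftrightarrow>
     (\<forall>\<sigma>::'a rel. Well_order \<sigma> \<and> \<sigma> <o (card_of (X)) \<longrightarrow>
       (\<forall>\<A>. disj_fam r \<sigma> \<A> \<and> (card_of (\<A>)) =o r \<longrightarrow>
         (\<forall>\<tau>::'m \<Rightarrow> 't. (\<forall>x\<in>M. \<tau> x \<in> T) \<longrightarrow>
           (\<exists>a\<in>\<A>. \<exists>b\<in>\<A>. set_lt r a b \<and>
              (\<forall>\<alpha>\<in>a. \<forall>\<beta>\<in>b. c \<alpha> \<beta> = \<tau> (p \<alpha> \<beta>))))))"

definition pr0 :: "'a rel \<Rightarrow> 't set \<Rightarrow> 'x set \<Rightarrow> 'm set \<Rightarrow> ('a \<Rightarrow> 'a \<Rightarrow> 'm)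
                    \<Rightarrow> ('a \<Rightarrow> 'a \<Rightarrow> 't) \<Rightarrow> bool" where
  "pr0 r T X M p c \<longleftrightarrow>
     (\<forall>\<sigma>::'a rel. Well_order \<sigma> \<and> \<sigma> <o (card_of (X)) \<longrightarrow>
       (\<forall>\<A>. disj_fam r \<sigma> \<A> \<and> (card_of (\<A>)) =o r \<longrightarrow>
         (\<forall>\<tau>::'a \<Rightarrow> 'a \<Rightarrow> 'm \<Rightarrow> 't. (\<forall>i\<in>Field \<sigma>. \<forall>j\<in>Field \<sigma>. \<forall>x\<in>M. \<tau> i j x \<in> T) \<longrightarrow>
           (\<exists>a\<in>\<A>. \<exists>b\<in>\<A>. set_lt r a b \<and>
              (\<forall>i\<in>Field \<sigma>. \<forall>j\<in>Field \<sigma>.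
                 c (nth_elem r \<sigma> a i) (nth_elem r \<sigma> b j)
                   = \<tau> i j (p (nth_elem r \<sigma> a i) (nth_elem r \<sigma> b j)))))))"

definition pr1_nu :: "'a rel \<Rightarrow> 'n set \<Rightarrow> 't set \<Rightarrow> 'x set \<Rightarrow> 'm set \<Rightarrow> ('a \<Rightarrow> 'a \<Rightarrow> 'm)
                    \<Rightarrow> ('a \<Rightarrow> 'a \<Rightarrow> 't) \<Rightarrow> bool" where
  "pr1_nu r N T X M p c \<longleftrightarrow>
     (\<forall>\<sigma>::'a rel. Well_order \<sigma> \<and> \<sigma> <o (card_of (X)) \<longrightarrow>
       (\<forall>\<A> \<B>. disj_fam r \<sigma> \<A> \<and> disj_fam r \<sigma> \<B> \<and> (card_of (\<A>)) =o (card_of (N)) \<and> (card_of (\<B>)) =o r \<longrightarrow>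
         (\<exists>a\<in>\<A>. \<forall>\<tau>::'m \<Rightarrow> 't. (\<forall>x\<in>M. \<tau> x \<in> T) \<longrightarrow>
           (\<exists>b\<in>\<B>. set_lt r a b \<and>
              (\<forall>\<alpha>\<in>a. \<forall>\<beta>\<in>b. c \<alpha> \<beta> = \<tau> (p \<alpha> \<beta>))))))"

definition pr0_nu :: "'a rel \<Rightarrow> 'n set \<Rightarrow> 't set \<Rightarrow> 'x set \<Rightarrow> 'm set \<Rightarrow> ('a \<Rightarrow> 'a \<Rightarrow> 'm)
                    \<Rightarrow> ('a \<Rightarrow> 'a \<Rightarrow> 't) \<Rightarrow> bool" where
  "pr0_nu r N T X M p c \<longleftrightarrow>
     (\<forall>\<sigma>::'a rel. Well_order \<sigma> \<and> \<sigma> <o (card_of (X)) \<longrightarrow>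
       (\<forall>\<A> \<B>. disj_fam r \<sigma> \<A> \<and> disj_fam r \<sigma> \<B> \<and> (card_of (\<A>)) =o (card_of (N)) \<and> (card_of (\<B>)) =o r \<longrightarrow>
         (\<exists>a\<in>\<A>. \<forall>\<tau>::'a \<Rightarrow> 'a \<Rightarrow> 'm \<Rightarrow> 't.
             (\<forall>i\<in>Field \<sigma>. \<forall>j\<in>Field \<sigma>. \<forall>x\<in>M. \<tau> i j x \<in> T) \<longrightarrow>
           (\<exists>b\<in>\<B>. set_lt r a b \<and>
              (\<forall>i\<in>Field \<sigma>. \<forall>j\<in>Field \<sigma>.
                 c (nth_elem r \<sigma> a i) (nth_elem r \<sigma> b j)
                   = \<tau> i j (p (nth_elem r \<sigma> a i) (nth_elem r \<sigma> b j)))))))"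

end

theory Submission
  imports Defs "HOL-Library.FuncSet"
begin

(* Since kappa <= 2^lambda, the ordinals below kappa have pairwise distinct codes in Pow lambda,
   and any two of them are separated by a point of lambda.  Enumerate a set a of order type
   sigma < chi along an initial segment of chi.  Its trace -- the separating points of all pairs
   of its elements, together with which of these points lie in the code of each element --
   ranges over a set of size lambda^<chi < kappa, and from the trace of a and an ordinal alpha
   in a one can read off the position of alpha in a.  Since theta^<chi = theta, every colour of
   c1 can be decoded into a pair of traces and a sigma x sigma matrix of colours, and c0(alpha, beta)
   is the entry of that matrix at the positions of alpha and beta.  By regularity of kappa, any
   family of kappa many sets has kappa many members with a common trace; applying pr1 to these
   with the map sending nu to a colour that decodes to the traces and to the matrix
   (tau_ij(nu))_ij yields a < b on which c0 realises the given matrix of functions. *)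

unbundle cardinal_syntax

lemma card_of_Func_ordLeq_mono:
  assumes "|A1| \<le>o |B1|" "|A2| \<le>o |B2|" "A2 = {} \<Longrightarrow> B2 = {}"
  shows "|Func A2 A1| \<le>o |Func B2 B1|"
  using cexp_mono'[of "|A1|" "|B1|" "|A2|" "|B2|"] assms by (simp add: cexp_def Field_card_of)

lemma card_of_Times_ordLeq_infinite:
  assumes "infinite Z" "|A| \<le>o |Z|" "|B| \<le>o |Z|"
  shows "|A \<times> B| \<le>o |Z|"
  using card_of_Times_ordLeq_infinite_Field[OF _ _ _ card_of_Card_order, of Z A B] assms
  by (simp add: Field_card_of)

lemma finite_ordLess_infinite2: "finite A \<Longrightarrow> infinite B \<Longrightarrow> |A| <o |B|"
  using finite_ordLess_infinite[OF card_of_Well_order card_of_Well_order, of A B]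
  by (simp add: Field_card_of)

lemma card_of_Func_bool_ordLeq:
  assumes "infinite Z"
  shows "|Func S (UNIV::bool set)| \<le>o |Func S Z|"
proof -
  have "|UNIV::bool set| \<le>o |Z|"
    using ordLess_imp_ordLeq[OF finite_ordLess_infinite2[of "UNIV::bool set", OF _ assms]] by simp
  then show ?thesis using card_of_Func_ordLeq_mono[OF _ ordLeq_refl[OF card_of_Card_order]] by blast
qed

lemma card_of_Func_finite_ordLeq:
  assumes "finite S" "infinite Z"
  shows "|Func S Z| \<le>o |Z|"
  using assms(1)
proof (induction S rule: finite_induct)
  case empty
  show ?case
    using ordLess_imp_ordLeq[OF finite_ordLess_infinite2[of "Func {} Z" Z]] assms(2)
    by (simp add: Func_empty)
next
  case (insert x S)
  let ?split = "\<lambda>f. (\<lambda>y\<in>S. f y, f x)"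
  have "|Func (insert x S) Z| \<le>o |Func S Z \<times> Z|"
  proof (rule card_of_ordLeqI[of ?split])
    show "inj_on ?split (Func (insert x S) Z)"
      unfolding inj_on_def Func_def by (auto simp: fun_eq_iff) metis
  qed (auto simp: Func_def)
  also have "|Func S Z \<times> Z| \<le>o |Z|"
    using card_of_Times_ordLeq_infinite[OF assms(2) insert.IH ordLeq_refl[OF card_of_Card_order]] .
  finally show ?case .
qed

lemma card_of_singleton_ordLess:
  assumes "\<exists>x1\<in>X. \<exists>x2\<in>X. x1 \<noteq> x2"
  shows "|{y}| <o |X|"
proof -
  have "\<not> |X| \<le>o |{y}|"
  proof
    assume "|X| \<le>o |{y}|"
    then obtain f where "inj_on f X" "f ` X \<subseteq> {y}" unfolding card_of_ordLeq[symmetric] by blast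
    then show False using assms unfolding inj_on_def by blast
  qed
  then show ?thesis using not_ordLeq_iff_ordLess[OF card_of_Well_order card_of_Well_order] by blast
qed

text \<open>Finite sets count as small so that smallness is closed under products also for finite X.\<close>
definition small :: "'x set \<Rightarrow> 'b set \<Rightarrow> bool" where
  "small X S \<longleftrightarrow> finite S \<or> |S| <o |X|"

lemma small_Times:
  assumes "small X A" "small X B"
  shows "small X (A \<times> B)"
proof (cases "finite A \<and> finite B")
  case True
  then show ?thesis by (simp add: small_def)
next
  case False
  consider "|A| \<le>o |B|" | "|B| \<le>o |A|"
    using ordLeq_total[OF card_of_Well_order card_of_Well_order] by blast
  then show ?thesis
  proof cases
    case 1
    then have "infinite B" using False card_of_ordLeq_finite by blast
    then show ?thesis
      using card_of_Times_ordLeq_infinite[OF _ 1 ordLeq_refl[OF card_of_Card_order]] assms(2)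
        ordLeq_ordLess_trans unfolding small_def by blast
  next
    case 2
    then have "infinite A" using False card_of_ordLeq_finite by blast
    then show ?thesis
      using card_of_Times_ordLeq_infinite[OF _ ordLeq_refl[OF card_of_Card_order] 2] assms(1)
        ordLeq_ordLess_trans unfolding small_def by blast
  qed
qed

lemma card_of_Func_small:
  fixes X :: "'x set" and S :: "'s set"
  assumes Func_le: "\<And>S::'x set. |S| <o |X| \<Longrightarrow> |Func S Z| \<le>o |D|"
    and "infinite Z" "|Z| \<le>o |D|" "small X S"
  shows "|Func S Z| \<le>o |D|"
proof (cases "|S| <o |X|")
  case True
  then obtain f where f: "inj_on f S" "f ` S \<subseteq> X"
    using ordLess_imp_ordLeq[OF True] unfolding card_of_ordLeq[symmetric] by blast
  have "|S| \<le>o |f ` S|" using f(1) card_of_ordLeqI by blast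
  then have "|Func S Z| \<le>o |Func (f ` S) Z|"
    by (rule card_of_Func_ordLeq_mono[OF ordLeq_refl[OF card_of_Card_order]]) simp
  also have "|Func (f ` S) Z| \<le>o |D|"
    using Func_le ordLeq_ordLess_trans[OF card_of_image True] by blast
  finally show ?thesis .
next
  case False
  then have "finite S" using \<open>small X S\<close> unfolding small_def by blast
  then show ?thesis
    using ordLeq_transitive[OF card_of_Func_finite_ordLeq[OF _ \<open>infinite Z\<close>] \<open>|Z| \<le>o |D|\<close>] by blast
qed

lemma Field_Restr_of_subset:
  assumes "Well_order w" "S \<subseteq> Field w"
  shows "Field (Restr w S) = S"
proof -
  have "refl_on (Field w) w"
    using assms(1) unfolding well_order_on_def linear_order_on_def partial_order_on_def preorder_on_def
    by blast
  then show ?thesis using assms(2) unfolding refl_on_def Field_def by blast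
qed

lemma bij_betw_nth_elem:
  assumes "Well_order r" "a \<subseteq> Field r" "Restr r a =o \<sigma>"
  shows "bij_betw (nth_elem r \<sigma> a) (Field \<sigma>) a"
proof -
  have "\<exists>f. iso \<sigma> (Restr r a) f" using assms(3) ordIso_symmetric unfolding ordIso_def by blast
  then have "iso \<sigma> (Restr r a) (SOME f. iso \<sigma> (Restr r a) f)" by (rule someI_ex)
  then show ?thesis
    using Field_Restr_of_subset[OF assms(1,2)] unfolding iso_def nth_elem_def[abs_def] by simp
qed

lemma regularCard_pigeonhole:
  assumes "Cinfinite r" "regularCard r" "|A| =o r" "f ` A \<subseteq> P" "|P| <o r"
  shows "\<exists>\<pi>\<in>P. |{a\<in>A. f a = \<pi>}| =o r"
proof (rule ccontr)
  assume "\<not> ?thesis"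
  then have "|{a\<in>A. f a = \<pi>}| <o r" if "\<pi> \<in> P" for \<pi>
    using that card_of_mono1[of "{a\<in>A. f a = \<pi>}" A] ordLeq_ordIso_trans[OF _ assms(3)]
      ordLeq_iff_ordLess_or_ordIso by blast
  then have "|\<Union>\<pi>\<in>P. {a\<in>A. f a = \<pi>}| <o r"
    by (rule regularCard_UNION_bound[OF assms(1,2,5)])
  moreover have "(\<Union>\<pi>\<in>P. {a\<in>A. f a = \<pi>}) = A" using assms(4) by blast
  ultimately show False using assms(3) not_ordLess_ordIso by auto
qed

lemma disj_fam_subset: "disj_fam r \<sigma> A \<Longrightarrow> A' \<subseteq> A \<Longrightarrow> disj_fam r \<sigma> A'"
  unfolding disj_fam_def by (meson pairwise_subset subsetD)

lemma Field_empty_if_subsingleton: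
  assumes "\<not> (\<exists>x1\<in>X. \<exists>x2\<in>X. x1 \<noteq> x2)" "\<sigma> <o |X|"
  shows "Field \<sigma> = {}"
proof (rule ccontr)
  assume "Field \<sigma> \<noteq> {}"
  then obtain i where "i \<in> Field \<sigma>" by blast
  then have "|X| \<le>o |Field \<sigma>|"
    using assms(1) by (intro card_of_ordLeqI[of "\<lambda>_. i"]) (auto simp: inj_on_def)
  then show False using ordLess_Field[OF assms(2)] not_ordLess_ordLeq by blast
qed

lemma ex_olt:
  assumes "Card_order r" "infinite (Field r)"
  shows "\<exists>\<alpha> \<beta>. olt r \<alpha> \<beta>"
proof -
  obtain \<alpha> \<beta> where "\<alpha> \<in> Field r" "\<beta> \<in> Field r" "\<alpha> \<noteq> \<beta>"
    using assms(2) by (metis finite.emptyI finite_insert insertI1 subsetI finite_subset)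
  moreover have "total_on (Field r) r"
    using assms(1) unfolding card_order_on_def well_order_on_def linear_order_on_def by blast
  ultimately show ?thesis unfolding olt_def total_on_def by metis
qed

lemma pr0_if_Field_empty:
  fixes r :: "'a rel" and p :: "'a \<Rightarrow> 'a \<Rightarrow> 'm" and c :: "'a \<Rightarrow> 'a \<Rightarrow> 't"
  assumes "\<And>\<sigma>::'a rel. \<sigma> <o |X| \<Longrightarrow> Field \<sigma> = {}" "t \<in> T" "pr1 r T X M p c"
  shows "pr0 r T X M p c"
  unfolding pr0_def
proof (intro allI impI)
  fix \<sigma> :: "'a rel" and A :: "'a set set" and \<tau> :: "'a \<Rightarrow> 'a \<Rightarrow> 'm \<Rightarrow> 't"
  assume "Well_order \<sigma> \<and> \<sigma> <o |X|" "disj_fam r \<sigma> A \<and> |A| =o r"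
  then have "\<exists>a\<in>A. \<exists>b\<in>A. set_lt r a b"
    using assms(3)[unfolded pr1_def, rule_format, of \<sigma> A "\<lambda>_. t"] assms(2) by blast
  then show "\<exists>a\<in>A. \<exists>b\<in>A. set_lt r a b \<and> (\<forall>i\<in>Field \<sigma>. \<forall>j\<in>Field \<sigma>.
      c (nth_elem r \<sigma> a i) (nth_elem r \<sigma> b j) = \<tau> i j (p (nth_elem r \<sigma> a i) (nth_elem r \<sigma> b j)))"
    using assms(1) \<open>Well_order \<sigma> \<and> \<sigma> <o |X|\<close> by blast
qed

lemma pr0_nu_if_Field_empty:
  fixes r :: "'a rel" and p :: "'a \<Rightarrow> 'a \<Rightarrow> 'm" and c :: "'a \<Rightarrow> 'a \<Rightarrow> 't"
  assumes "\<And>\<sigma>::'a rel. \<sigma> <o |X| \<Longrightarrow> Field \<sigma> = {}" "t \<in> T" "pr1_nu r N T X M p c"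
  shows "pr0_nu r N T X M p c"
  unfolding pr0_nu_def
proof (intro allI impI)
  fix \<sigma> :: "'a rel" and A B :: "'a set set"
  assume \<sigma>: "Well_order \<sigma> \<and> \<sigma> <o |X|"
    and AB: "disj_fam r \<sigma> A \<and> disj_fam r \<sigma> B \<and> |A| =o |N| \<and> |B| =o r"
  obtain a where "a \<in> A" and a: "\<forall>\<tau>. (\<forall>x\<in>M. \<tau> x \<in> T) \<longrightarrow>
      (\<exists>b\<in>B. set_lt r a b \<and> (\<forall>\<alpha>\<in>a. \<forall>\<beta>\<in>b. c \<alpha> \<beta> = \<tau> (p \<alpha> \<beta>)))"
    using assms(3) \<sigma> AB unfolding pr1_nu_def by blast
  then obtain b where "b \<in> B" "set_lt r a b" using spec[OF a, of "\<lambda>_. t"] assms(2) by blast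
  then show "\<exists>a\<in>A. \<forall>\<tau>. (\<forall>i\<in>Field \<sigma>. \<forall>j\<in>Field \<sigma>. \<forall>x\<in>M. \<tau> i j x \<in> T) \<longrightarrow>
      (\<exists>b\<in>B. set_lt r a b \<and> (\<forall>i\<in>Field \<sigma>. \<forall>j\<in>Field \<sigma>.
        c (nth_elem r \<sigma> a i) (nth_elem r \<sigma> b j) = \<tau> i j (p (nth_elem r \<sigma> a i) (nth_elem r \<sigma> b j))))"
    using assms(1) \<sigma> \<open>a \<in> A\<close> by blast
qed

type_synonym ('x, 'l) trace = "('x \<times> 'x \<Rightarrow> 'l) \<times> ('x \<times> ('x \<times> 'x) \<Rightarrow> bool)"

type_synonym ('x, 'l, 't) colour_code = "'x \<times> ('x, 'l) trace \<times> ('x, 'l) trace \<times> ('x \<times> 'x \<Rightarrow> 't)"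

locale pr0_from_pr1 =
  fixes r :: "'a rel" and L :: "'l set" and X :: "'x set" and T :: "'t set" and C :: "'c set"
  assumes card: "Card_order r"
    and regular: "regularCard r"
    and Field_infinite: "infinite (Field r)"
    and r_le_Pow: "r \<le>o |Pow L|"
    and Func_L: "\<And>S::'x set. |S| <o |X| \<Longrightarrow> |Func S L| \<le>o |C|"
    and C_less: "|C| <o r"
    and C_le_T: "|C| \<le>o |T|"
    and Func_T: "\<And>S::'x set. |S| <o |X| \<Longrightarrow> |Func S T| \<le>o |T|"
    and two_elements: "\<exists>x1\<in>X. \<exists>x2\<in>X. x1 \<noteq> x2"
begin

lemma L_infinite: "infinite L"
proof -
  have "|Field r| \<le>o |Pow L|" using ordIso_ordLeq_trans[OF card_of_Field_ordIso[OF card] r_le_Pow] .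
  from card_of_ordLeq_infinite[OF this Field_infinite] show ?thesis by simp
qed

lemma L_le_C: "|L| \<le>o |C|"
proof -
  obtain x where "x \<in> X" using two_elements by blast
  have "|L| \<le>o |Func {x} L|"
  proof (rule card_of_ordLeqI[of "\<lambda>l. \<lambda>_\<in>{x}. l"])
    show "inj_on (\<lambda>l. \<lambda>_\<in>{x}. l) L" by (rule inj_onI) (metis restrict_apply' singletonI)
  qed (simp add: Func_def)
  also have "|Func {x} L| \<le>o |C|" using Func_L card_of_singleton_ordLess[OF two_elements] .
  finally show ?thesis .
qed

lemma C_infinite: "infinite C" using card_of_ordLeq_infinite[OF L_le_C L_infinite] .

lemma T_infinite: "infinite T" using card_of_ordLeq_infinite[OF C_le_T C_infinite] .

lemma Func_L_small: "small X S \<Longrightarrow> |Func S L| \<le>o |C|"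
  using card_of_Func_small[OF Func_L L_infinite L_le_C] .

lemma Func_T_small: "small X S \<Longrightarrow> |Func S T| \<le>o |T|"
  using card_of_Func_small[OF Func_T T_infinite ordLeq_refl[OF card_of_Card_order]] .

lemma Func_bool_small: "small X S \<Longrightarrow> |Func S (UNIV::bool set)| \<le>o |C|"
proof -
  assume "small X S"
  have "|Func S (UNIV::bool set)| \<le>o |Func S L|" using card_of_Func_bool_ordLeq[OF L_infinite] .
  also have "|Func S L| \<le>o |C|" using Func_L_small[OF \<open>small X S\<close>] .
  finally show ?thesis .
qed

lemma X_le_T: "|X| \<le>o |T|"
proof (rule ccontr)
  assume "\<not> |X| \<le>o |T|"
  then have "small X T"
    using not_ordLeq_iff_ordLess[OF card_of_Well_order card_of_Well_order] unfolding small_def by blast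
  have "|Pow T| =o |Func T (UNIV::bool set)|" by (rule card_of_Pow_Func)
  also have "|Func T (UNIV::bool set)| \<le>o |Func T T|" using card_of_Func_bool_ordLeq[OF T_infinite] .
  also have "|Func T T| \<le>o |T|" using Func_T_small[OF \<open>small X T\<close>] .
  finally show False using card_of_Pow not_ordLess_ordLeq by blast
qed

definition seg :: "'x \<Rightarrow> 'x set" where
  "seg j = underS (card_of X) j"

lemma small_seg: "j \<in> X \<Longrightarrow> small X (seg j)"
  unfolding small_def seg_def using card_of_underS[OF card_of_Card_order, of j X]
  by (simp add: Field_card_of)

lemma small_seg_Times: "j \<in> X \<Longrightarrow> small X (seg j \<times> seg j)"
  using small_Times small_seg by blast

lemma ex_seg_bij_betw:
  assumes "Well_order \<sigma>" "\<sigma> <o |X|"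
  obtains j g where "j \<in> X" "bij_betw g (seg j) (Field \<sigma>)"
proof -
  have "\<exists>j\<in>X. \<sigma> =o Restr (card_of X) (seg j)"
    using ordLess_iff_ordIso_Restr[OF card_of_Well_order[of X] assms(1)] assms(2)
    by (simp add: Field_card_of seg_def)
  then obtain j where j: "j \<in> X" "\<sigma> =o Restr (card_of X) (seg j)" by blast
  then obtain f where f: "bij_betw f (Field \<sigma>) (Field (Restr (card_of X) (seg j)))"
    unfolding ordIso_def iso_def by blast
  have "seg j \<subseteq> Field (card_of X)" unfolding seg_def underS_def Field_def by blast
  then have "Field (Restr (card_of X) (seg j)) = seg j"
    using Field_Restr_of_subset card_of_Well_order by blast
  then show ?thesis using that j(1) f bij_betw_inv_into by fastforce
qed

definition enc :: "'a \<Rightarrow> 'l set" where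
  "enc = (SOME F. inj_on F (Field r) \<and> F ` Field r \<subseteq> Pow L)"

lemma inj_on_enc: "inj_on enc (Field r)"
  and enc_subset: "\<alpha> \<in> Field r \<Longrightarrow> enc \<alpha> \<subseteq> L"
proof -
  have "|Field r| \<le>o |Pow L|" using ordIso_ordLeq_trans[OF card_of_Field_ordIso[OF card] r_le_Pow] .
  then have "\<exists>F. inj_on F (Field r) \<and> F ` Field r \<subseteq> Pow L" unfolding card_of_ordLeq[symmetric] .
  then have "inj_on enc (Field r) \<and> enc ` Field r \<subseteq> Pow L" unfolding enc_def by (rule someI_ex)
  then show "inj_on enc (Field r)" and "\<alpha> \<in> Field r \<Longrightarrow> enc \<alpha> \<subseteq> L" by blast+
qed

definition sep :: "'a \<Rightarrow> 'a \<Rightarrow> 'l" where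
  "sep \<alpha> \<beta> = (SOME z. z \<in> L \<and> (\<alpha> \<noteq> \<beta> \<longrightarrow> (z \<in> enc \<alpha> \<longleftrightarrow> z \<notin> enc \<beta>)))"

lemma
  assumes "\<alpha> \<in> Field r" "\<beta> \<in> Field r"
  shows sep_in_L: "sep \<alpha> \<beta> \<in> L"
    and sep_separates: "\<alpha> \<noteq> \<beta> \<Longrightarrow> sep \<alpha> \<beta> \<in> enc \<alpha> \<longleftrightarrow> sep \<alpha> \<beta> \<notin> enc \<beta>"
proof -
  have "\<exists>z. z \<in> L \<and> (\<alpha> \<noteq> \<beta> \<longrightarrow> (z \<in> enc \<alpha> \<longleftrightarrow> z \<notin> enc \<beta>))"
  proof (cases "\<alpha> = \<beta>")
    case True
    then show ?thesis using L_infinite by (metis ex_in_conv finite.emptyI)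
  next
    case False
    then have "enc \<alpha> \<noteq> enc \<beta>" using inj_on_enc assms unfolding inj_on_def by blast
    then show ?thesis using enc_subset assms by blast
  qed
  then have "sep \<alpha> \<beta> \<in> L \<and> (\<alpha> \<noteq> \<beta> \<longrightarrow> (sep \<alpha> \<beta> \<in> enc \<alpha> \<longleftrightarrow> sep \<alpha> \<beta> \<notin> enc \<beta>))"
    unfolding sep_def by (rule someI_ex)
  then show "sep \<alpha> \<beta> \<in> L" and "\<alpha> \<noteq> \<beta> \<Longrightarrow> sep \<alpha> \<beta> \<in> enc \<alpha> \<longleftrightarrow> sep \<alpha> \<beta> \<notin> enc \<beta>"
    by blast+
qed

text \<open>The position of an element of the range of an injective f is recovered from its
  trace: for k \<noteq> l the point separating f k from f l tells k apart from l.\<close>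
definition trace :: "'x \<Rightarrow> ('x \<Rightarrow> 'a) \<Rightarrow> ('x, 'l) trace" where
  "trace j f =
     (\<lambda>(k, l) \<in> seg j \<times> seg j. sep (f k) (f l),
      \<lambda>(k, k', l) \<in> seg j \<times> seg j \<times> seg j. sep (f k') (f l) \<in> enc (f k))"

definition Traces :: "'x \<Rightarrow> ('x, 'l) trace set" where
  "Traces j = Func (seg j \<times> seg j) L \<times> Func (seg j \<times> seg j \<times> seg j) UNIV"

lemma trace_in_Traces: "f ` seg j \<subseteq> Field r \<Longrightarrow> trace j f \<in> Traces j"
  unfolding trace_def Traces_def Func_def using sep_in_L by (auto simp: image_subset_iff)

lemma card_of_Traces:
  assumes "j \<in> X"
  shows "|Traces j| \<le>o |C|"
proof -
  have "|Func (seg j \<times> seg j) L| \<le>o |C|" using Func_L_small small_seg_Times[OF assms] .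
  moreover have "|Func (seg j \<times> seg j \<times> seg j) (UNIV::bool set)| \<le>o |C|"
    using Func_bool_small small_Times[OF small_seg[OF assms] small_seg_Times[OF assms]] .
  ultimately show ?thesis
    unfolding Traces_def using card_of_Times_ordLeq_infinite[OF C_infinite] by blast
qed

definition position :: "'x \<Rightarrow> ('x, 'l) trace \<Rightarrow> 'a \<Rightarrow> 'x" where
  "position j t \<alpha> =
     (SOME k. k \<in> seg j \<and> (\<forall>q \<in> seg j \<times> seg j. snd t (k, q) \<longleftrightarrow> fst t q \<in> enc \<alpha>))"

lemma position_trace:
  assumes f: "inj_on f (seg j)" "f ` seg j \<subseteq> Field r" and "k \<in> seg j"
  shows "position j (trace j f) (f k) = k"
  unfolding position_def
proof (rule some_equality)
  show "k \<in> seg j \<and>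
    (\<forall>q \<in> seg j \<times> seg j. snd (trace j f) (k, q) \<longleftrightarrow> fst (trace j f) q \<in> enc (f k))"
    using \<open>k \<in> seg j\<close> unfolding trace_def by auto
next
  fix k'
  assume k': "k' \<in> seg j \<and>
    (\<forall>q \<in> seg j \<times> seg j. snd (trace j f) (k', q) \<longleftrightarrow> fst (trace j f) q \<in> enc (f k))"
  show "k' = k"
  proof (rule ccontr)
    assume "k' \<noteq> k"
    have "sep (f k') (f k) \<in> enc (f k') \<longleftrightarrow> sep (f k') (f k) \<in> enc (f k)"
      using k' \<open>k \<in> seg j\<close> spec[of _ "(k', k)"] unfolding trace_def by auto
    moreover have "f k' \<noteq> f k" using f(1) k' \<open>k \<in> seg j\<close> \<open>k' \<noteq> k\<close> unfolding inj_on_def by blast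
    ultimately show False using sep_separates f(2) k' \<open>k \<in> seg j\<close> by blast
  qed
qed

definition Codes :: "('x, 'l, 't) colour_code set" where
  "Codes = (\<Union>j\<in>X. {j} \<times> Traces j \<times> Traces j \<times> Func (seg j \<times> seg j) T)"

lemma card_of_Codes: "|Codes| \<le>o |T|"
  unfolding Codes_def
proof (rule card_of_UNION_ordLeq_infinite[OF T_infinite X_le_T], intro ballI)
  fix j assume j: "j \<in> X"
  have Tr: "|Traces j| \<le>o |T|" using ordLeq_transitive[OF card_of_Traces[OF j] C_le_T] .
  have F: "|Func (seg j \<times> seg j) T| \<le>o |T|" using Func_T_small[OF small_seg_Times[OF j]] .
  have "|{j}| \<le>o |T|"
    using ordLess_imp_ordLeq[OF finite_ordLess_infinite2[of "{j}", OF _ T_infinite]] by simp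
  then show "|{j} \<times> Traces j \<times> Traces j \<times> Func (seg j \<times> seg j) T| \<le>o |T|"
    using Tr F card_of_Times_ordLeq_infinite[OF T_infinite] by metis
qed

lemma Codes_nonempty: "Codes \<noteq> {}"
proof -
  obtain j where "j \<in> X" using two_elements by blast
  moreover have "Traces j \<noteq> {}" "Func (seg j \<times> seg j) T \<noteq> {}"
    using infinite_imp_nonempty[OF L_infinite] infinite_imp_nonempty[OF T_infinite]
    by (simp_all add: Traces_def Func_is_emp)
  ultimately show ?thesis unfolding Codes_def by blast
qed

definition decode :: "'t \<Rightarrow> ('x, 'l, 't) colour_code" where
  "decode = (SOME d. d ` T = Codes)"

lemma decode_image: "decode ` T = Codes"
proof -
  have "\<exists>d. d ` T = Codes" using card_of_ordLeq2[OF Codes_nonempty] card_of_Codes by blast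
  then show ?thesis unfolding decode_def by (rule someI_ex)
qed

definition encode :: "('x, 'l, 't) colour_code \<Rightarrow> 't" where
  "encode = inv_into T decode"

lemma encode_in_T: "x \<in> Codes \<Longrightarrow> encode x \<in> T"
  unfolding encode_def by (metis decode_image inv_into_into)

lemma decode_encode: "x \<in> Codes \<Longrightarrow> decode (encode x) = x"
  unfolding encode_def by (metis decode_image f_inv_into_f)

definition colour_of_code :: "('x, 'l, 't) colour_code \<Rightarrow> 'a \<Rightarrow> 'a \<Rightarrow> 't" where
  "colour_of_code code \<alpha> \<beta> = (case code of (j, ta, tb, h) \<Rightarrow>
     let v = h (position j ta \<alpha>, position j tb \<beta>) in if v \<in> T then v else (SOME t. t \<in> T))"

lemma colour_of_code_in_T: "colour_of_code code \<alpha> \<beta> \<in> T"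
proof -
  have "(SOME t. t \<in> T) \<in> T" using T_infinite by (metis ex_in_conv finite.emptyI someI_ex)
  then show ?thesis unfolding colour_of_code_def by (simp add: Let_def split: prod.split)
qed

lemma colour_of_code_trace:
  assumes "inj_on fa (seg j)" "fa ` seg j \<subseteq> Field r" "inj_on fb (seg j)" "fb ` seg j \<subseteq> Field r"
    and "k \<in> seg j" "l \<in> seg j" "h (k, l) \<in> T"
  shows "colour_of_code (j, trace j fa, trace j fb, h) (fa k) (fb l) = h (k, l)"
  unfolding colour_of_code_def using position_trace assms by simp

definition decoded_colouring :: "('a \<Rightarrow> 'a \<Rightarrow> 't) \<Rightarrow> 'a \<Rightarrow> 'a \<Rightarrow> 't" where
  "decoded_colouring c \<alpha> \<beta> = colour_of_code (decode (c \<alpha> \<beta>)) \<alpha> \<beta>"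

lemma coloring_into_decoded_colouring: "coloring_into r (decoded_colouring c) T"
  unfolding coloring_into_def decoded_colouring_def using colour_of_code_in_T by blast

definition matrix_colour :: "'x \<Rightarrow> ('x, 'l) trace \<Rightarrow> ('x, 'l) trace \<Rightarrow> ('x \<Rightarrow> 'i)
    \<Rightarrow> ('i \<Rightarrow> 'i \<Rightarrow> 'm \<Rightarrow> 't) \<Rightarrow> 'm \<Rightarrow> 't" where
  "matrix_colour j ta tb g \<tau> \<nu> = encode (j, ta, tb, \<lambda>(k, l) \<in> seg j \<times> seg j. \<tau> (g k) (g l) \<nu>)"

lemma matrix_code_in_Codes:
  assumes "j \<in> X" "ta \<in> Traces j" "tb \<in> Traces j" "g ` seg j \<subseteq> I"
    and "\<forall>i\<in>I. \<forall>i'\<in>I. \<forall>x\<in>M. \<tau> i i' x \<in> T" "\<nu> \<in> M"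
  shows "(j, ta, tb, \<lambda>(k, l) \<in> seg j \<times> seg j. \<tau> (g k) (g l) \<nu>) \<in> Codes"
proof -
  have "(\<lambda>(k, l) \<in> seg j \<times> seg j. \<tau> (g k) (g l) \<nu>) \<in> Func (seg j \<times> seg j) T"
    using assms(4-6) unfolding Func_def by auto
  then show ?thesis unfolding Codes_def using assms(1-3) by blast
qed

lemma matrix_colour_in_T:
  assumes "j \<in> X" "ta \<in> Traces j" "tb \<in> Traces j" "g ` seg j \<subseteq> I"
    and "\<forall>i\<in>I. \<forall>i'\<in>I. \<forall>x\<in>M. \<tau> i i' x \<in> T" "\<nu> \<in> M"
  shows "matrix_colour j ta tb g \<tau> \<nu> \<in> T"
  unfolding matrix_colour_def using encode_in_T[OF matrix_code_in_Codes[OF assms]] .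

lemma decode_matrix_colour:
  assumes "j \<in> X" "ta \<in> Traces j" "tb \<in> Traces j" "g ` seg j \<subseteq> I"
    and "\<forall>i\<in>I. \<forall>i'\<in>I. \<forall>x\<in>M. \<tau> i i' x \<in> T" "\<nu> \<in> M"
  shows "decode (matrix_colour j ta tb g \<tau> \<nu>) = (j, ta, tb, \<lambda>(k, l) \<in> seg j \<times> seg j. \<tau> (g k) (g l) \<nu>)"
  unfolding matrix_colour_def using decode_encode[OF matrix_code_in_Codes[OF assms]] .

definition enum :: "'a rel \<Rightarrow> ('x \<Rightarrow> 'a) \<Rightarrow> 'a set \<Rightarrow> 'x \<Rightarrow> 'a" where
  "enum \<sigma> g a = nth_elem r \<sigma> a \<circ> g"

lemma bij_betw_enum:
  assumes "a \<subseteq> Field r" "Restr r a =o \<sigma>" "bij_betw g (seg j) (Field \<sigma>)"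
  shows "bij_betw (enum \<sigma> g a) (seg j) a"
  unfolding enum_def
  using bij_betw_trans[OF assms(3) bij_betw_nth_elem[OF card_order_on_well_order_on[OF card] assms(1,2)]]
  .

lemma trace_enum_in_Traces:
  assumes "a \<subseteq> Field r" "Restr r a =o \<sigma>" "bij_betw g (seg j) (Field \<sigma>)"
  shows "trace j (enum \<sigma> g a) \<in> Traces j"
  using trace_in_Traces bij_betw_imp_surj_on[OF bij_betw_enum[OF assms]] assms(1) by metis

lemma decoded_colouring_realizes_matrix:
  assumes j: "j \<in> X" and g: "bij_betw g (seg j) (Field \<sigma>)"
    and a: "a \<subseteq> Field r" "Restr r a =o \<sigma>" and b: "b \<subseteq> Field r" "Restr r b =o \<sigma>"
    and "set_lt r a b" and p: "coloring_into r p M"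
    and \<tau>: "\<forall>i\<in>Field \<sigma>. \<forall>i'\<in>Field \<sigma>. \<forall>x\<in>M. \<tau> i i' x \<in> T"
    and c: "\<forall>\<alpha>\<in>a. \<forall>\<beta>\<in>b. c \<alpha> \<beta> =
      matrix_colour j (trace j (enum \<sigma> g a)) (trace j (enum \<sigma> g b)) g \<tau> (p \<alpha> \<beta>)"
  shows "\<forall>i\<in>Field \<sigma>. \<forall>i'\<in>Field \<sigma>.
           decoded_colouring c (nth_elem r \<sigma> a i) (nth_elem r \<sigma> b i')
             = \<tau> i i' (p (nth_elem r \<sigma> a i) (nth_elem r \<sigma> b i'))"
proof (intro ballI)
  fix i i' assume "i \<in> Field \<sigma>" "i' \<in> Field \<sigma>"
  then obtain k l where kl: "k \<in> seg j" "l \<in> seg j" "i = g k" "i' = g l"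
    using g unfolding bij_betw_def by blast
  have ea: "bij_betw (enum \<sigma> g a) (seg j) a" and eb: "bij_betw (enum \<sigma> g b) (seg j) b"
    using bij_betw_enum a b g by blast+
  define \<alpha> \<beta> where "\<alpha> = enum \<sigma> g a k" and "\<beta> = enum \<sigma> g b l"
  have "\<alpha> \<in> a" "\<beta> \<in> b" using ea eb kl(1,2) unfolding \<alpha>_def \<beta>_def bij_betw_def by blast+
  then have \<nu>: "p \<alpha> \<beta> \<in> M" using p \<open>set_lt r a b\<close> unfolding coloring_into_def set_lt_def by blast
  have "decode (c \<alpha> \<beta>) = (j, trace j (enum \<sigma> g a), trace j (enum \<sigma> g b),
      \<lambda>(k, l) \<in> seg j \<times> seg j. \<tau> (g k) (g l) (p \<alpha> \<beta>))"
    using decode_matrix_colour[OF j trace_enum_in_Traces[OF a g] trace_enum_in_Traces[OF b g]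
        bij_betw_imp_surj_on[OF g, THEN equalityD1] \<tau> \<nu>] c \<open>\<alpha> \<in> a\<close> \<open>\<beta> \<in> b\<close>
    by simp
  moreover have "\<tau> (g k) (g l) (p \<alpha> \<beta>) \<in> T" using \<tau> \<nu> kl \<open>i \<in> Field \<sigma>\<close> \<open>i' \<in> Field \<sigma>\<close> by blast
  moreover have "inj_on (enum \<sigma> g a) (seg j)" "enum \<sigma> g a ` seg j \<subseteq> Field r"
    "inj_on (enum \<sigma> g b) (seg j)" "enum \<sigma> g b ` seg j \<subseteq> Field r"
    using ea eb a(1) b(1) unfolding bij_betw_def by simp_all
  ultimately have "decoded_colouring c \<alpha> \<beta> = \<tau> (g k) (g l) (p \<alpha> \<beta>)"
    using colour_of_code_trace[of "enum \<sigma> g a" j "enum \<sigma> g b" k l, folded \<alpha>_def \<beta>_def]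
      kl(1,2)
    unfolding decoded_colouring_def by simp
  then show "decoded_colouring c (nth_elem r \<sigma> a i) (nth_elem r \<sigma> b i')
      = \<tau> i i' (p (nth_elem r \<sigma> a i) (nth_elem r \<sigma> b i'))"
    unfolding kl(3,4) \<alpha>_def \<beta>_def enum_def by simp
qed

lemma common_trace_subfamily:
  assumes "j \<in> X" "bij_betw g (seg j) (Field \<sigma>)" "disj_fam r \<sigma> A" "|A| =o r"
  obtains A' t where "A' \<subseteq> A" "disj_fam r \<sigma> A'" "|A'| =o r" "t \<in> Traces j"
    "\<forall>a\<in>A'. trace j (enum \<sigma> g a) = t"
proof -
  have Cinf: "Cinfinite r" using card Field_infinite unfolding cinfinite_def by blast
  have traces: "(\<lambda>a. trace j (enum \<sigma> g a)) ` A \<subseteq> Traces j"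
  proof (rule image_subsetI)
    fix a assume "a \<in> A"
    then have "a \<subseteq> Field r" "Restr r a =o \<sigma>" using assms(3) unfolding disj_fam_def by blast+
    then show "trace j (enum \<sigma> g a) \<in> Traces j" using trace_enum_in_Traces assms(2) by blast
  qed
  have "|Traces j| <o r" using ordLeq_ordLess_trans[OF card_of_Traces[OF assms(1)] C_less] .
  with regularCard_pigeonhole[OF Cinf regular assms(4) traces]
  obtain t where "t \<in> Traces j" and t: "|{a\<in>A. trace j (enum \<sigma> g a) = t}| =o r"
    by blast
  show ?thesis
  proof (rule that[OF _ _ t \<open>t \<in> Traces j\<close>])
    show "disj_fam r \<sigma> {a\<in>A. trace j (enum \<sigma> g a) = t}"
      by (rule disj_fam_subset[OF assms(3)]) blast
  qed auto
qed

lemma pr0_decoded_colouring: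
  fixes p :: "'a \<Rightarrow> 'a \<Rightarrow> 'm"
  assumes p: "coloring_into r p M" and c: "pr1 r T X M p c"
  shows "pr0 r T X M p (decoded_colouring c)"
  unfolding pr0_def
proof (intro allI impI, elim conjE)
  fix \<sigma> :: "'a rel" and A :: "'a set set" and \<tau> :: "'a \<Rightarrow> 'a \<Rightarrow> 'm \<Rightarrow> 't"
  assume \<sigma>: "Well_order \<sigma>" "\<sigma> <o |X|" and A: "disj_fam r \<sigma> A" "|A| =o r"
    and \<tau>: "\<forall>i\<in>Field \<sigma>. \<forall>j\<in>Field \<sigma>. \<forall>x\<in>M. \<tau> i j x \<in> T"
  obtain j g where jg: "j \<in> X" "bij_betw g (seg j) (Field \<sigma>)" using ex_seg_bij_betw[OF \<sigma>] .
  obtain A' t where A': "A' \<subseteq> A" "disj_fam r \<sigma> A'" "|A'| =o r" "t \<in> Traces j"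
      and t: "\<forall>a\<in>A'. trace j (enum \<sigma> g a) = t"
    using common_trace_subfamily[OF jg A] .
  have "matrix_colour j t t g \<tau> x \<in> T" if "x \<in> M" for x
    using matrix_colour_in_T[OF jg(1) A'(4) A'(4) bij_betw_imp_surj_on[OF jg(2), THEN equalityD1] \<tau> that] .
  from c[unfolded pr1_def, rule_format, of \<sigma> A' "matrix_colour j t t g \<tau>",
      OF conjI[OF \<sigma>] conjI[OF A'(2,3)] this]
  obtain a b where ab: "a \<in> A'" "b \<in> A'" "set_lt r a b"
      and "\<forall>\<alpha>\<in>a. \<forall>\<beta>\<in>b. c \<alpha> \<beta> = matrix_colour j t t g \<tau> (p \<alpha> \<beta>)"
    by blast
  then have c_ab: "\<forall>\<alpha>\<in>a. \<forall>\<beta>\<in>b. c \<alpha> \<beta> =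
      matrix_colour j (trace j (enum \<sigma> g a)) (trace j (enum \<sigma> g b)) g \<tau> (p \<alpha> \<beta>)"
    using t ab(1,2) by simp
  have "a \<subseteq> Field r" "Restr r a =o \<sigma>" "b \<subseteq> Field r" "Restr r b =o \<sigma>"
    using A'(2) ab(1,2) unfolding disj_fam_def by blast+
  from decoded_colouring_realizes_matrix[OF jg this ab(3) p \<tau> c_ab]
  show "\<exists>a\<in>A. \<exists>b\<in>A. set_lt r a b \<and> (\<forall>i\<in>Field \<sigma>. \<forall>j\<in>Field \<sigma>.
      decoded_colouring c (nth_elem r \<sigma> a i) (nth_elem r \<sigma> b j)
        = \<tau> i j (p (nth_elem r \<sigma> a i) (nth_elem r \<sigma> b j)))"
    using ab A'(1) by blast
qed

lemma pr0_nu_decoded_colouring: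
  fixes p :: "'a \<Rightarrow> 'a \<Rightarrow> 'm"
  assumes p: "coloring_into r p M" and c: "pr1_nu r N T X M p c"
  shows "pr0_nu r N T X M p (decoded_colouring c)"
  unfolding pr0_nu_def
proof (intro allI impI, elim conjE)
  fix \<sigma> :: "'a rel" and A B :: "'a set set"
  assume \<sigma>: "Well_order \<sigma>" "\<sigma> <o |X|"
    and AB: "disj_fam r \<sigma> A" "disj_fam r \<sigma> B" "|A| =o |N|" "|B| =o r"
  obtain j g where jg: "j \<in> X" "bij_betw g (seg j) (Field \<sigma>)" using ex_seg_bij_betw[OF \<sigma>] .
  obtain B' t where B': "B' \<subseteq> B" "disj_fam r \<sigma> B'" "|B'| =o r" "t \<in> Traces j"
      and t: "\<forall>b\<in>B'. trace j (enum \<sigma> g b) = t"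
    using common_trace_subfamily[OF jg AB(2,4)] .
  from c[unfolded pr1_nu_def, rule_format, OF conjI[OF \<sigma>] conjI[OF AB(1) conjI[OF B'(2) conjI[OF AB(3) B'(3)]]]]
  obtain a where "a \<in> A" and a: "\<forall>\<tau>'. (\<forall>x\<in>M. \<tau>' x \<in> T) \<longrightarrow>
      (\<exists>b\<in>B'. set_lt r a b \<and> (\<forall>\<alpha>\<in>a. \<forall>\<beta>\<in>b. c \<alpha> \<beta> = \<tau>' (p \<alpha> \<beta>)))"
    by blast
  have a_fam: "a \<subseteq> Field r" "Restr r a =o \<sigma>" using AB(1) \<open>a \<in> A\<close> unfolding disj_fam_def by blast+
  show "\<exists>a\<in>A. \<forall>\<tau>. (\<forall>i\<in>Field \<sigma>. \<forall>j\<in>Field \<sigma>. \<forall>x\<in>M. \<tau> i j x \<in> T) \<longrightarrow>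
      (\<exists>b\<in>B. set_lt r a b \<and> (\<forall>i\<in>Field \<sigma>. \<forall>j\<in>Field \<sigma>.
        decoded_colouring c (nth_elem r \<sigma> a i) (nth_elem r \<sigma> b j)
          = \<tau> i j (p (nth_elem r \<sigma> a i) (nth_elem r \<sigma> b j))))"
  proof (intro bexI[OF _ \<open>a \<in> A\<close>] allI impI)
    fix \<tau> :: "'a \<Rightarrow> 'a \<Rightarrow> 'm \<Rightarrow> 't"
    assume \<tau>: "\<forall>i\<in>Field \<sigma>. \<forall>j\<in>Field \<sigma>. \<forall>x\<in>M. \<tau> i j x \<in> T"
    let ?ta = "trace j (enum \<sigma> g a)"
    have "\<forall>x\<in>M. matrix_colour j ?ta t g \<tau> x \<in> T"
      using matrix_colour_in_T[OF jg(1) trace_enum_in_Traces[OF a_fam jg(2)] B'(4)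
          bij_betw_imp_surj_on[OF jg(2), THEN equalityD1] \<tau>] by blast
    with a obtain b where b: "b \<in> B'" "set_lt r a b"
        and "\<forall>\<alpha>\<in>a. \<forall>\<beta>\<in>b. c \<alpha> \<beta> = matrix_colour j ?ta t g \<tau> (p \<alpha> \<beta>)"
      by blast
    then have c_ab: "\<forall>\<alpha>\<in>a. \<forall>\<beta>\<in>b. c \<alpha> \<beta> =
        matrix_colour j ?ta (trace j (enum \<sigma> g b)) g \<tau> (p \<alpha> \<beta>)"
      using t b(1) by simp
    have "b \<subseteq> Field r" "Restr r b =o \<sigma>" using B'(2) b(1) unfolding disj_fam_def by blast+
    from decoded_colouring_realizes_matrix[OF jg a_fam this b(2) p \<tau> c_ab]
    show "\<exists>b\<in>B. set_lt r a b \<and> (\<forall>i\<in>Field \<sigma>. \<forall>j\<in>Field \<sigma>.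
        decoded_colouring c (nth_elem r \<sigma> a i) (nth_elem r \<sigma> b j)
          = \<tau> i j (p (nth_elem r \<sigma> a i) (nth_elem r \<sigma> b j)))"
      using b B'(1) by blast
  qed
qed

end

theorem theorem4p1:
  fixes r :: "'a rel" and M :: "'m set" and L :: "'l set" and X :: "'x set"
    and T :: "'t set" and c1 :: "'a \<Rightarrow> 'a \<Rightarrow> 't"
  assumes kappa_card: "Card_order r"
    and kappa_regular: "regularCard r"
    and kappa_uncountable: "(natLeq, r) \<in> ordLess"
    and mu_le: "(card_of M, r) \<in> ordLeq"
    and lambda_le: "(card_of L, r) \<in> ordLeq"
    and chi_le: "(card_of X, r) \<in> ordLeq"
    and theta_le: "(card_of T, r) \<in> ordLeq"
    and lambda_chi: "\<exists>C::'a set. cexp_less_is L X C \<and> (card_of C, r) \<in> ordLess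
                        \<and> (card_of C, card_of T) \<in> ordLeq"
    and kappa_le_pow: "(r, card_of (Pow L)) \<in> ordLeq"
    and theta_chi: "cexp_less_is T X T"
    and c1: "coloring_into r c1 T"
  shows "\<exists>c0 :: 'a \<Rightarrow> 'a \<Rightarrow> 't. coloring_into r c0 T \<and>
           (\<forall>p :: 'a \<Rightarrow> 'a \<Rightarrow> 'm. coloring_into r p M \<longrightarrow>
              (pr1 r T X M p c1 \<longrightarrow> pr0 r T X M p c0) \<and>
              (\<forall>N :: 'a set set. pr1_nu r N T X M p c1 \<longrightarrow> pr0_nu r N T X M p c0))"
proof -
  obtain C :: "'a set" where C: "cexp_less_is L X C" "|C| <o r" "|C| \<le>o |T|"
    using lambda_chi by blast
  have r_infinite: "infinite (Field r)"
    using cinfinite_mono[OF ordLess_imp_ordLeq[OF kappa_uncountable] natLeq_cinfinite]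
    unfolding cinfinite_def .
  show ?thesis
  proof (cases "\<exists>x1\<in>X. \<exists>x2\<in>X. x1 \<noteq> x2")
    case True
    interpret pr0_from_pr1 r L X T C
      using kappa_card kappa_regular r_infinite kappa_le_pow C(2,3) True C(1) theta_chi
      by unfold_locales (simp_all add: cexp_less_is_def)
    show ?thesis
      by (intro exI[of _ "decoded_colouring c1"] conjI allI impI coloring_into_decoded_colouring
          pr0_decoded_colouring pr0_nu_decoded_colouring)
  next
    case False
    obtain \<alpha> \<beta> where "olt r \<alpha> \<beta>" using ex_olt[OF kappa_card r_infinite] by blast
    then have t: "c1 \<alpha> \<beta> \<in> T" using c1 unfolding coloring_into_def by blast
    note trivial = Field_empty_if_subsingleton[OF False]
    show ?thesis
      by (intro exI[of _ c1] conjI allI impI c1 pr0_if_Field_empty[OF trivial t]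
          pr0_nu_if_Field_empty[OF trivial t])
  qed
qed

end
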